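(* In $(\lambda\beta\eta\pi* )'$, every variable $x^\varphi$ (of any type $\varphi$) is reducible.
   Context: Types are built from a distinguished type constant $\top$ and type variables by means of $\varphi\times\psi$ and $\varphi\to\psi$; an atomic type is $\top$ or a type variable. Terms are simply typed (each variable carries its type): the term constant $*^\top$, variables $x^\varphi$, abstractions $(\lambda x^\varphi.t^\psi)^{\varphi\to\psi}$, applications $(u^{\varphi\to\psi}v^\varphi)^\psi$, pairs $\langle u^\varphi,v^\psi\rangle^{\varphi\times\psi}$, projections $(\pi_1 t^{\varphi\times\psi})^\varphi$, $(\pi_2 t^{\varphi\times\psi})^\psi$. Terms are identified up to renaming of bound variables, written $\equiv$; $\mathrm{FV}(t)$ is the set of free variables. The set $\mathit{Iso}(\top)$ is the least set of types containing $\top$, containing $\varphi\to\tau$ whenever $\tau\in\mathit{Iso}(\top)$ ($\varphi$ arbitrary), and containing $\tau_1\times\tau_2$ whenever $\tau_1,\tau_2\in\mathit{Iso}(\top)$. For $\tau\in\mathit{Iso}(\top)$ the canonical term $*^\tau$ is: $*^\top$ the constant; $*^{\varphi\to\tau}:=\lambda x^\varphi.*^\tau$; $*^{\tau_1\times\tau_2}:=\langle *^{\tau_1},*^{\tau_2}\rangle$ (writing $*^\varphi$ presupposes $\varphi\in\mathit{Iso}(\top)$). The one-step rewrite relation $\to$ of $(\lambda\beta\eta\pi* )'$ is the closure under arbitrary term contexts of: $(\beta)$ $(\lambda x.u)v\to u[x:=v]$; $(\pi_1)$ $\pi_1\langle u,v\rangle\to u$; $(\pi_2)$ $\pi_2\langle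 u,v\rangle\to v$; $(\eta)$ $\lambda x.tx\to t$ if $x\notin\mathrm{FV}(t)$; $(SP)$ $\langle\pi_1u,\pi_2u\rangle\to u$; (gentop) $u^\tau\to *^\tau$ if $\tau\in\mathit{Iso}(\top)$ and $u\not\equiv *^\tau$; $(\eta_{top})$ $\lambda x^\tau.t\,*^\tau\to t$ if $\tau\in\mathit{Iso}(\top)$, $x\notin\mathrm{FV}(t)$; $(SP_{top}1)$ $\langle\pi_1u,*^\tau\rangle\to u$ for $u$ of type $\varphi\times\tau$, $\tau\in\mathit{Iso}(\top)$; $(SP_{top}2)$ $\langle *^\tau,\pi_2u\rangle\to u$ for $u$ of type $\tau\times\psi$, $\tau\in\mathit{Iso}(\top)$. A term is SN if there is no infinite $\to$-sequence starting from it. Reducibility is defined by induction on types: a term of atomic type is reducible iff it is SN; a term $t$ of type $\varphi\times\psi$ is reducible iff $\pi_1t$ and $\pi_2t$ are reducible; a term $t$ of type $\varphi\to\psi$ is reducible iff $tu$ is reducible for every reducible term $u$ of type $\varphi$. *)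

theory Defs
  imports Main
begin

datatype ty = Top | TVar nat | Prod ty ty | Arr ty ty

inductive_set Iso :: "ty set" where
  iso_top: "Top \<in> Iso"
| iso_arr: "\<tau> \<in> Iso \<Longrightarrow> Arr \<phi> \<tau> \<in> Iso"
| iso_prod: "\<tau>1 \<in> Iso \<Longrightarrow> \<tau>2 \<in> Iso \<Longrightarrow> Prod \<tau>1 \<tau>2 \<in> Iso"

text \<open>Terms modulo renaming of bound variables are represented with de Bruijn indices
for bound variables; free variables are named (by a nat) and carry their type.
Bound variables get their type from the annotation of their binder.\<close>

datatype trm = Star | Fv nat ty | Bv nat | Lam ty trm | App trm trm
  | Pair trm trm | Pi1 trm | Pi2 trm

fun lift :: "nat \<Rightarrow> trm \<Rightarrow> trm" where
  "lift k Star = Star"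
| "lift k (Fv x \<phi>) = Fv x \<phi>"
| "lift k (Bv i) = (if i < k then Bv i else Bv (Suc i))"
| "lift k (Lam \<phi> t) = Lam \<phi> (lift (Suc k) t)"
| "lift k (App s t) = App (lift k s) (lift k t)"
| "lift k (Pair s t) = Pair (lift k s) (lift k t)"
| "lift k (Pi1 t) = Pi1 (lift k t)"
| "lift k (Pi2 t) = Pi2 (lift k t)"

fun subst :: "trm \<Rightarrow> nat \<Rightarrow> trm \<Rightarrow> trm" where
  "subst Star k s = Star"
| "subst (Fv x \<phi>) k s = Fv x \<phi>"
| "subst (Bv i) k s = (if i < k then Bv i else if i = k then s else Bv (i - 1))"
| "subst (Lam \<phi> t) k s = Lam \<phi> (subst t (Suc k) (lift 0 s))"
| "subst (App t u) k s = App (subst t k s) (subst u k s)"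
| "subst (Pair t u) k s = Pair (subst t k s) (subst u k s)"
| "subst (Pi1 t) k s = Pi1 (subst t k s)"
| "subst (Pi2 t) k s = Pi2 (subst t k s)"

text \<open>Typing; the context lists the types of the enclosing binders (innermost first).\<close>
inductive has_ty :: "ty list \<Rightarrow> trm \<Rightarrow> ty \<Rightarrow> bool" where
  ty_star: "has_ty \<Gamma> Star Top"
| ty_fv: "has_ty \<Gamma> (Fv x \<phi>) \<phi>"
| ty_bv: "i < length \<Gamma> \<Longrightarrow> has_ty \<Gamma> (Bv i) (\<Gamma> ! i)"
| ty_lam: "has_ty (\<phi> # \<Gamma>) t \<psi> \<Longrightarrow> has_ty \<Gamma> (Lam \<phi> t) (Arr \<phi> \<psi>)"
| ty_app: "has_ty \<Gamma> u (Arr \<phi> \<psi>) \<Longrightarrow> has_ty \<Gamma> v \<phi> \<Longrightarrow> has_ty \<Gamma> (App u v) \<psi>"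
| ty_pair: "has_ty \<Gamma> u \<phi> \<Longrightarrow> has_ty \<Gamma> v \<psi> \<Longrightarrow> has_ty \<Gamma> (Pair u v) (Prod \<phi> \<psi>)"
| ty_pi1: "has_ty \<Gamma> t (Prod \<phi> \<psi>) \<Longrightarrow> has_ty \<Gamma> (Pi1 t) \<phi>"
| ty_pi2: "has_ty \<Gamma> t (Prod \<phi> \<psi>) \<Longrightarrow> has_ty \<Gamma> (Pi2 t) \<psi>"

text \<open>Canonical term *^tau (only meaningful for tau in Iso).\<close>
fun star :: "ty \<Rightarrow> trm" where
  "star Top = Star"
| "star (TVar n) = Star"
| "star (Arr \<phi> \<tau>) = Lam \<phi> (star \<tau>)"
| "star (Prod \<tau>1 \<tau>2) = Pair (star \<tau>1) (star \<tau>2)"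

inductive red :: "ty list \<Rightarrow> trm \<Rightarrow> trm \<Rightarrow> bool" where
  beta: "red \<Gamma> (App (Lam \<phi> u) v) (subst u 0 v)"
| pi1: "red \<Gamma> (Pi1 (Pair u v)) u"
| pi2: "red \<Gamma> (Pi2 (Pair u v)) v"
| eta: "red \<Gamma> (Lam \<phi> (App (lift 0 t) (Bv 0))) t"
| SP: "red \<Gamma> (Pair (Pi1 u) (Pi2 u)) u"
| gentop: "has_ty \<Gamma> u \<tau> \<Longrightarrow> \<tau> \<in> Iso \<Longrightarrow> u \<noteq> star \<tau> \<Longrightarrow> red \<Gamma> u (star \<tau>)"
| eta_top: "\<tau> \<in> Iso \<Longrightarrow> red \<Gamma> (Lam \<tau> (App (lift 0 t) (star \<tau>))) t"
| SP_top1: "has_ty \<Gamma> u (Prod \<phi> \<tau>) \<Longrightarrow> \<tau> \<in> Iso \<Longrightarrow> red \<Gamma> (Pair (Pi1 u) (star \<tau>)) u"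
| SP_top2: "has_ty \<Gamma> u (Prod \<tau> \<psi>) \<Longrightarrow> \<tau> \<in> Iso \<Longrightarrow> red \<Gamma> (Pair (star \<tau>) (Pi2 u)) u"
| ctx_lam: "red (\<phi> # \<Gamma>) t t' \<Longrightarrow> red \<Gamma> (Lam \<phi> t) (Lam \<phi> t')"
| ctx_app1: "red \<Gamma> u u' \<Longrightarrow> red \<Gamma> (App u v) (App u' v)"
| ctx_app2: "red \<Gamma> v v' \<Longrightarrow> red \<Gamma> (App u v) (App u v')"
| ctx_pair1: "red \<Gamma> u u' \<Longrightarrow> red \<Gamma> (Pair u v) (Pair u' v)"
| ctx_pair2: "red \<Gamma> v v' \<Longrightarrow> red \<Gamma> (Pair u v) (Pair u v')"
| ctx_pi1: "red \<Gamma> t t' \<Longrightarrow> red \<Gamma> (Pi1 t) (Pi1 t')"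
| ctx_pi2: "red \<Gamma> t t' \<Longrightarrow> red \<Gamma> (Pi2 t) (Pi2 t')"

text \<open>Terms proper are those without loose bound indices, i.e. typed in the empty context.\<close>

definition SN :: "trm \<Rightarrow> bool" where
  "SN t \<longleftrightarrow> \<not> (\<exists>f. f 0 = t \<and> (\<forall>n. red [] (f n) (f (Suc n))))"

fun reducible :: "ty \<Rightarrow> trm \<Rightarrow> bool" where
  "reducible Top t = SN t"
| "reducible (TVar n) t = SN t"
| "reducible (Prod \<phi> \<psi>) t = (reducible \<phi> (Pi1 t) \<and> reducible \<psi> (Pi2 t))"
| "reducible (Arr \<phi> \<psi>) t =
     (\<forall>u. has_ty [] u \<phi> \<longrightarrow> reducible \<phi> u \<longrightarrow> reducible \<psi> (App t u))"

end

theory Submission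
  imports Defs
begin

text \<open>Call a term neutral if it is a free variable or a canonical term \<open>*\<^sup>\<tau>\<close> under a spine
of projections and of applications to strongly normalising arguments. By induction on types,
neutral terms are reducible and reducible terms are SN (Tait's CR3 and CR1 at once); for
\<open>\<phi> \<rightarrow> \<psi>\<close>, a reducible \<open>t\<close> is SN because \<open>t x\<^sup>\<phi>\<close> is reducible, the variable being neutral.
Neutral terms are closed under reduction: a \<open>\<beta>\<close>- or \<open>\<pi>\<close>-redex in head position of a neutral
term has a canonical term as its head and contracts to a canonical term, (gentop) yields a
canonical term, and canonical terms are normal. Strong normalisation of neutral terms then
follows by induction on the SN arguments.\<close>

abbreviation sn :: "trm \<Rightarrow> bool" where
  "sn \<equiv> Wellfounded.accp (\<lambda>b a. red [] a b)"

lemma SN_if_sn: "sn t \<Longrightarrow> SN t"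
proof (induction rule: Wellfounded.accp.induct)
  case (accI t)
  show ?case unfolding SN_def
  proof
    assume "\<exists>f. f 0 = t \<and> (\<forall>n. red [] (f n) (f (Suc n)))"
    then obtain f where f: "f 0 = t" "\<forall>n. red [] (f n) (f (Suc n))" by blast
    then have "SN (f 1)" using accI.IH by (metis One_nat_def)
    moreover have "\<exists>g. g 0 = f 1 \<and> (\<forall>n. red [] (g n) (g (Suc n)))"
      using f by (intro exI[of _ "\<lambda>n. f (Suc n)"]) simp
    ultimately show False unfolding SN_def by blast
  qed
qed

lemma sn_if_SN: "SN t \<Longrightarrow> sn t"
proof (rule ccontr)
  assume SN: "SN t" and not_sn: "\<not> sn t"
  define next_bad where "next_bad a = (SOME b. red [] a b \<and> \<not> sn b)" for a
  have next_bad: "red [] a (next_bad a) \<and> \<not> sn (next_bad a)" if "\<not> sn a" for a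
    unfolding next_bad_def by (rule someI_ex) (use that not_accp_down in metis)
  define f where "f n = (next_bad ^^ n) t" for n
  have "\<not> sn (f n)" for n
    by (induction n) (use not_sn next_bad in \<open>auto simp: f_def\<close>)
  then have "\<forall>n. red [] (f n) (f (Suc n))"
    using next_bad by (simp add: f_def)
  moreover have "f 0 = t" by (simp add: f_def)
  ultimately show False using SN unfolding SN_def by blast
qed

lemma SN_iff_sn: "SN t \<longleftrightarrow> sn t"
  using SN_if_sn sn_if_SN by blast

lemma SN_context_reflect:
  assumes "\<And>a b. red [] a b \<Longrightarrow> red [] (C a) (C b)" and "SN (C t)"
  shows "SN t"
proof -
  have "\<exists>g. g 0 = C t \<and> (\<forall>n. red [] (g n) (g (Suc n)))"
    if "f 0 = t" "\<forall>n. red [] (f n) (f (Suc n))" for f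
    using that assms(1) by (intro exI[of _ "C \<circ> f"]) simp
  with assms(2) show ?thesis unfolding SN_def by blast
qed

lemma SN_App_fun: "SN (App t u) \<Longrightarrow> SN t"
  by (rule SN_context_reflect[where C="\<lambda>a. App a u"]) (auto intro: ctx_app1)

lemma SN_Pi1: "SN (Pi1 t) \<Longrightarrow> SN t"
  by (rule SN_context_reflect[where C=Pi1]) (auto intro: ctx_pi1)

lemma has_ty_star_unique: "\<tau> \<in> Iso \<Longrightarrow> has_ty \<Gamma> (star \<tau>) \<sigma> \<Longrightarrow> \<sigma> = \<tau>"
proof (induction \<tau> arbitrary: \<Gamma> \<sigma> rule: Iso.induct)
  case iso_top
  then show ?case by (auto elim: has_ty.cases)
next
  case (iso_arr \<tau> \<phi>)
  from iso_arr.prems show ?case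
    by (auto elim!: has_ty.cases[of _ "Lam _ _"] dest: iso_arr.IH)
next
  case (iso_prod \<tau>1 \<tau>2)
  from iso_prod.prems show ?case
    by (auto elim!: has_ty.cases[of _ "Pair _ _"] dest: iso_prod.IH)
qed

lemma star_neq [simp]: "star \<tau> \<noteq> App a b" "star \<tau> \<noteq> Pi1 a" "star \<tau> \<noteq> Pi2 a"
  by (cases \<tau>; simp)+

text \<open>A canonical term has no (gentop)-redex because its type is determined.\<close>

lemma star_normal: "\<tau> \<in> Iso \<Longrightarrow> \<not> red \<Gamma> (star \<tau>) t"
proof (induction \<tau> arbitrary: \<Gamma> t rule: Iso.induct)
  case iso_top
  show ?case
  proof
    assume "red \<Gamma> (star Top) t"
    then show False
      by (cases rule: red.cases) (auto dest: has_ty_star_unique[OF Iso.iso_top, simplified])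
  qed
next
  case (iso_arr \<tau> \<phi>)
  show ?case
  proof
    assume "red \<Gamma> (star (Arr \<phi> \<tau>)) t"
    then show False
      by (cases rule: red.cases)
        (auto simp: iso_arr.IH dest: has_ty_star_unique[OF Iso.iso_arr[OF iso_arr.hyps], simplified])
  qed
next
  case (iso_prod \<tau>1 \<tau>2)
  show ?case
  proof
    assume "red \<Gamma> (star (Prod \<tau>1 \<tau>2)) t"
    then show False
      by (cases rule: red.cases)
        (auto simp: iso_prod.IH dest: has_ty_star_unique[OF Iso.iso_prod[OF iso_prod.hyps], simplified])
  qed
qed

lemma sn_star: "\<tau> \<in> Iso \<Longrightarrow> sn (star \<tau>)"
  by (rule Wellfounded.accp.accI) (auto dest: star_normal)

lemma subst_star [simp]: "subst (star \<tau>) k s = star \<tau>"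
  by (induction \<tau> arbitrary: k s) auto

inductive neutral :: "trm \<Rightarrow> bool" where
  neutral_Fv: "neutral (Fv x \<phi>)"
| neutral_star: "\<tau> \<in> Iso \<Longrightarrow> neutral (star \<tau>)"
| neutral_App: "neutral s \<Longrightarrow> sn u \<Longrightarrow> neutral (App s u)"
| neutral_Pi1: "neutral s \<Longrightarrow> neutral (Pi1 s)"
| neutral_Pi2: "neutral s \<Longrightarrow> neutral (Pi2 s)"

lemma neutral_Lam_body_star:
  assumes "neutral (Lam \<phi> t)"
  obtains \<tau> where "\<tau> \<in> Iso" "t = star \<tau>"
  using assms by (cases rule: neutral.cases) (auto elim: star.elims Iso.cases)

lemma neutral_Pair_components_star:
  assumes "neutral (Pair a b)"
  obtains \<tau>1 \<tau>2 where "\<tau>1 \<in> Iso" "a = star \<tau>1" "\<tau>2 \<in> Iso" "b = star \<tau>2"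
  using assms by (cases rule: neutral.cases) (auto elim: star.elims Iso.cases)

lemma neutral_red: "neutral s \<Longrightarrow> red [] s s' \<Longrightarrow> neutral s'"
proof (induction s arbitrary: s' rule: neutral.induct)
  case (neutral_Fv x \<phi>)
  then show ?case by (cases rule: red.cases) (simp add: neutral_star)
next
  case (neutral_star \<tau>)
  then show ?case using star_normal by blast
next
  case (neutral_App s u)
  from neutral_App.prems show ?case
  proof (cases rule: red.cases)
    case (beta \<phi> t)
    with neutral_App.hyps(1) obtain \<tau> where "\<tau> \<in> Iso" "t = star \<tau>"
      by (auto elim: neutral_Lam_body_star)
    with beta show ?thesis by (simp add: neutral.neutral_star)
  next
    case (ctx_app2 u')
    with neutral_App.hyps show ?thesis
      by (auto intro: neutral.neutral_App accp_downward)
  qed (use neutral_App in \<open>auto intro: neutral.intros\<close>)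
next
  case (neutral_Pi1 s)
  from neutral_Pi1.prems show ?case
  proof (cases rule: red.cases)
    case (pi1 v)
    with neutral_Pi1.hyps show ?thesis
      by (auto elim: neutral_Pair_components_star intro: neutral.neutral_star)
  qed (use neutral_Pi1 in \<open>auto intro: neutral.intros\<close>)
next
  case (neutral_Pi2 s)
  from neutral_Pi2.prems show ?case
  proof (cases rule: red.cases)
    case (pi2 v)
    with neutral_Pi2.hyps show ?thesis
      by (auto elim: neutral_Pair_components_star intro: neutral.neutral_star)
  qed (use neutral_Pi2 in \<open>auto intro: neutral.intros\<close>)
qed

lemma sn_neutral_App:
  assumes "sn s" "sn u" "neutral s"
  shows "sn (App s u)"
  using assms
proof (induction s arbitrary: u rule: Wellfounded.accp.induct)
  case (accI s)
  note IH_fun = accI.IH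
  from \<open>sn u\<close> show ?case
  proof (induction u rule: Wellfounded.accp.induct)
    case (accI u)
    show ?case
    proof (rule Wellfounded.accp.accI)
      fix y assume "red [] (App s u) y"
      then show "sn y"
      proof (cases rule: red.cases)
        case (beta \<phi> t)
        with \<open>neutral s\<close> obtain \<tau> where "\<tau> \<in> Iso" "t = star \<tau>"
          by (auto elim: neutral_Lam_body_star)
        with beta show ?thesis by (simp add: sn_star)
      next
        case (ctx_app1 s')
        with \<open>neutral s\<close> show ?thesis
          using accI.hyps IH_fun by (blast intro: Wellfounded.accp.accI neutral_red)
      qed (use accI.IH in \<open>auto intro: sn_star\<close>)
    qed
  qed
qed

lemma sn_neutral_Pi1: "sn s \<Longrightarrow> neutral s \<Longrightarrow> sn (Pi1 s)"
proof (induction s rule: Wellfounded.accp.induct)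
  case (accI s)
  show ?case
  proof (rule Wellfounded.accp.accI)
    fix y assume "red [] (Pi1 s) y"
    then show "sn y"
    proof (cases rule: red.cases)
      case (pi1 v)
      with \<open>neutral s\<close> show ?thesis by (auto elim: neutral_Pair_components_star intro: sn_star)
    qed (use accI neutral_red in \<open>auto intro: sn_star\<close>)
  qed
qed

lemma sn_neutral_Pi2: "sn s \<Longrightarrow> neutral s \<Longrightarrow> sn (Pi2 s)"
proof (induction s rule: Wellfounded.accp.induct)
  case (accI s)
  show ?case
  proof (rule Wellfounded.accp.accI)
    fix y assume "red [] (Pi2 s) y"
    then show "sn y"
    proof (cases rule: red.cases)
      case (pi2 v)
      with \<open>neutral s\<close> show ?thesis by (auto elim: neutral_Pair_components_star intro: sn_star)
    qed (use accI neutral_red in \<open>auto intro: sn_star\<close>)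
  qed
qed

lemma sn_neutral: "neutral t \<Longrightarrow> sn t"
proof (induction rule: neutral.induct)
  case (neutral_Fv x \<phi>)
  show ?case
    by (rule Wellfounded.accp.accI) (auto elim: red.cases intro: sn_star)
qed (auto intro: sn_star sn_neutral_App sn_neutral_Pi1 sn_neutral_Pi2)

lemma reducible_neutral_and_SN:
  "(\<forall>t. neutral t \<longrightarrow> reducible \<phi> t) \<and> (\<forall>t. reducible \<phi> t \<longrightarrow> SN t)"
proof (induction \<phi>)
  case Top then show ?case using sn_neutral SN_iff_sn by auto
next
  case (TVar n) then show ?case using sn_neutral SN_iff_sn by auto
next
  case (Prod \<alpha> \<beta>)
  then show ?case by (auto intro: neutral.intros SN_Pi1)
next
  case (Arr \<alpha> \<beta>)
  have "reducible (Arr \<alpha> \<beta>) t" if "neutral t" for t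
  proof (simp, intro allI impI)
    fix u assume "reducible \<alpha> u"
    with Arr.IH(1) have "sn u" using SN_iff_sn by blast
    with \<open>neutral t\<close> Arr.IH(2) show "reducible \<beta> (App t u)" by (blast intro: neutral_App)
  qed
  moreover have "SN t" if "reducible (Arr \<alpha> \<beta>) t" for t
  proof -
    have "reducible \<alpha> (Fv 0 \<alpha>)" using Arr.IH(1) by (auto intro: neutral_Fv)
    with that have "reducible \<beta> (App t (Fv 0 \<alpha>))" by (auto intro: ty_fv)
    with Arr.IH(2) show "SN t" using SN_App_fun by blast
  qed
  ultimately show ?case by blast
qed

theorem mainTheorem5:
  fixes x :: nat and \<phi> :: ty
  shows "reducible \<phi> (Fv x \<phi>)"
  using reducible_neutral_and_SN neutral_Fv by blast

end
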